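(* Let $n\ge1$ and $\pi\in\mathfrak B_n$ with $\pi_1>0$ (resp. $\pi_1<0$). Then for every $T\in\mathrm{Orb}^*(T_\pi)$, writing $w(T)=0\sigma_1\cdots\sigma_n$, one has $\sigma_1>0$ (resp. $\sigma_1<0$).
   Context: $\mathfrak B_n$ is the set of signed permutations $\pi=\pi_1\cdots\pi_n$ (words over $\{\pm1,\dots,\pm n\}$ with $|\pi_1|,\dots,|\pi_n|$ a permutation of $[n]$), compared as integers; set $\pi_0=0$. Trees are rooted binary trees with each child designated left or right. A min–max tree is labeled bijectively by a totally ordered set so that each node's label is the minimum or maximum of its subtree's labels. A node with a child is inner; an inner node is a min-node (resp. max-node) if its label is the minimum (resp. maximum) of its subtree. An HR-tree is a min–max tree in which every inner node $s$ has a nonempty right subtree containing the maximum label of the subtree of $s$ if $s$ is a min-node, the minimum if $s$ is a max-node. The reading word is the in-order reading $w(T)=w(L)\,\ell_{\mathrm{root}}\,w(R)$. $\mathcal{BHR}_n$ is the set of HR-trees with label set $\{0,s_1,\dots,s_n\}$, $s_i\in\{i,-i\}$, such that $0$ is the first letter of $w(T)$; $T\mapsto w(T)=0\pi_1\cdots\pi_n$ is a bijection $\mathcal{BHR}_n\to\mathfrak B_n$ and $T_\pi$ is the tree with $w(T_\pi)=0\pi$. Modified HR-action: for $i\in[n]$ and $T_\pi\in\mathcal{BHR}_n$, let $v$ be the node labeled $\pi_i$. If $v$ is a leaf, or if the node labeled $0$ is a leaf whose parent is $v$, then $\widehat\psi_i(T_\pi)=T_\pi$. Otherwise, let $R$ consist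 of $\pi_i$ and the labels of the right subtree of $v$; relabel $v$ and its right subtree, keeping the shape, so that $v$ receives $\max R$ if $v$ is a min-node and $\min R$ if $v$ is a max-node, the right subtree nodes receiving the remaining elements of $R$ by the order-preserving bijection from their old labels; all other labels are unchanged. The $\widehat\psi_i$ are commuting involutions on $\mathcal{BHR}_n$, and $\mathrm{Orb}^*(T)$ is the set of trees obtained from $T$ by compositions of the $\widehat\psi_i$, $i\in[n]$. *)

theory Defs
  imports Main "HOL-Library.Tree"
begin

(* Trees: HOL-Library 'int tree' (Leaf = empty tree, Node l x r).
   A node Node l x r is inner iff l \<noteq> Leaf or r \<noteq> Leaf. *)

definition signed_perms :: "nat \<Rightarrow> int list set" where
  "signed_perms n = {p. length p = n \<and> distinct (map abs p) \<and> set (map abs p) = {1..int n}}"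

fun minmax_ok :: "int tree \<Rightarrow> bool" where
  "minmax_ok Leaf = True"
| "minmax_ok (Node l x r) = (minmax_ok l \<and> minmax_ok r \<and>
     (x = Min (set_tree (Node l x r)) \<or> x = Max (set_tree (Node l x r))))"

definition min_max_tree :: "int tree \<Rightarrow> bool" where
  "min_max_tree t = (distinct (inorder t) \<and> minmax_ok t)"

fun hr_ok :: "int tree \<Rightarrow> bool" where
  "hr_ok Leaf = True"
| "hr_ok (Node l x r) = (hr_ok l \<and> hr_ok r \<and>
     ((l \<noteq> Leaf \<or> r \<noteq> Leaf) \<longrightarrow>
        (r \<noteq> Leaf \<and>
         (if x = Min (set_tree (Node l x r))
          then Max (set_tree (Node l x r)) \<in> set_tree r
          else Min (set_tree (Node l x r)) \<in> set_tree r))))"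

definition HR_tree :: "int tree \<Rightarrow> bool" where
  "HR_tree t = (min_max_tree t \<and> hr_ok t)"

definition BHR :: "nat \<Rightarrow> int tree set" where
  "BHR n = {t. HR_tree t \<and>
     (\<exists>s::nat \<Rightarrow> int. (\<forall>i\<in>{1..n}. s i = int i \<or> s i = - int i) \<and>
        set_tree t = insert 0 (s ` {1..n})) \<and>
     inorder t \<noteq> [] \<and> hd (inorder t) = 0}"

definition T_pi :: "int list \<Rightarrow> int tree" where
  "T_pi p = (THE t. t \<in> BHR (length p) \<and> inorder t = 0 # p)"

(* order-preserving bijection from finite A onto finite B (same size) *)
definition order_iso :: "int set \<Rightarrow> int set \<Rightarrow> int \<Rightarrow> int" where
  "order_iso A B y = sorted_list_of_set B ! card {z\<in>A. z < y}"

fun hr_flip :: "int tree \<Rightarrow> int tree" where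
  "hr_flip Leaf = Leaf"
| "hr_flip (Node l x r) =
     (if l = Leaf \<and> r = Leaf then Node l x r
      else if l = Node Leaf 0 Leaf \<or> r = Node Leaf 0 Leaf then Node l x r
      else (let R = insert x (set_tree r);
                y = (if x = Min (set_tree (Node l x r)) then Max R else Min R)
            in Node l y (map_tree (order_iso (set_tree r) (R - {y})) r)))"

fun relabel_at :: "int \<Rightarrow> int tree \<Rightarrow> int tree" where
  "relabel_at a Leaf = Leaf"
| "relabel_at a (Node l x r) =
     (if x = a then hr_flip (Node l x r) else Node (relabel_at a l) x (relabel_at a r))"

(* modified HR-action psi_i: v is the node labelled pi_i, where w(T) = 0 pi *)
definition psi :: "nat \<Rightarrow> int tree \<Rightarrow> int tree" where
  "psi i t = relabel_at (inorder t ! i) t"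

inductive_set orb :: "nat \<Rightarrow> int tree \<Rightarrow> int tree set" for n :: nat and t0 :: "int tree" where
  base: "t0 \<in> orb n t0"
| step: "t \<in> orb n t0 \<Longrightarrow> i \<in> {1..n} \<Longrightarrow> psi i t \<in> orb n t0"

end

theory Submission
  imports Defs
begin

text \<open>In \<open>T\<^sub>\<pi>\<close> the node \<open>0\<close> is the leftmost node, and acting at a node changes
only that node and its right subtree. If \<open>0\<close> is a leaf, its parent carries \<open>\<pi>\<^sub>1\<close>;
acting there is excluded, and the parent lies in no right subtree, so the letter
after \<open>0\<close> stays \<open>\<pi>\<^sub>1\<close>. Otherwise \<open>0\<close> has a nonempty right subtree \<open>R\<close>, and since \<open>0\<close>
is the minimum or the maximum of its own subtree, all labels of \<open>R\<close> have the sign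
of \<open>\<pi>\<^sub>1\<close>. No \<open>\<psi>\<^sub>i\<close> acts at \<open>0\<close> itself, and acting elsewhere relabels \<open>R\<close>, if at
all, with labels of \<open>R\<close>; the letter after \<open>0\<close> is the first letter of \<open>R\<close>.
\<open>T\<^sub>\<pi>\<close> exists and is unique because the root of an HR-tree is the first extremal
letter of its reading word.\<close>

section \<open>Relabelling\<close>

lemma card_less_rank:
  fixes A :: "'a::order set"
  assumes "finite A" "y \<in> A"
  shows "card {z\<in>A. z < y} < card A"
proof (rule psubset_card_mono[OF assms(1)])
  have "y \<notin> {z\<in>A. z < y}" by simp
  then show "{z\<in>A. z < y} \<subset> A" using assms(2) by blast
qed

lemma strict_mono_on_order_iso:
  assumes "finite A" "finite B" "card A \<le> card B"
  shows "strict_mono_on A (order_iso A B)"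
proof (rule strict_mono_onI)
  fix y1 y2 assume "y1 \<in> A" "y2 \<in> A" "y1 < y2"
  then have "card {z\<in>A. z < y1} < card {z\<in>A. z < y2}"
    using assms(1) by (intro psubset_card_mono) auto
  moreover have "card {z\<in>A. z < y2} < length (sorted_list_of_set B)"
    using card_less_rank[OF assms(1) \<open>y2 \<in> A\<close>] assms(2,3) by simp
  ultimately show "order_iso A B y1 < order_iso A B y2"
    unfolding order_iso_def by (intro sorted_wrt_nth_less[OF strict_sorted_list_of_set])
qed

lemma order_iso_mem:
  assumes "finite A" "finite B" "card A \<le> card B" "y \<in> A"
  shows "order_iso A B y \<in> B"
proof -
  have "card {z\<in>A. z < y} < length (sorted_list_of_set B)"
    using card_less_rank[OF assms(1,4)] assms(2,3) by simp
  then show ?thesis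
    unfolding order_iso_def using assms(2) by (metis nth_mem set_sorted_list_of_set)
qed

lemma hr_flip_shape:
  "hr_flip (Node l x r) = Node l x r \<or> (\<exists>y f. hr_flip (Node l x r) = Node l y (map_tree f r))"
  unfolding hr_flip.simps Let_def by auto

lemma hr_flip_labels:
  assumes "distinct (inorder (Node l x r))"
  shows "set_tree (hr_flip (Node l x r)) \<subseteq> set_tree (Node l x r) \<and>
         distinct (inorder (hr_flip (Node l x r)))"
proof -
  define R where "R = insert x (set_tree r)"
  define y where "y = (if x = Min (set_tree (Node l x r)) then Max R else Min R)"
  define f where "f = order_iso (set_tree r) (R - {y})"
  have "y \<in> R" unfolding y_def R_def by (simp del: insert_iff)
  have "x \<notin> set_tree r" and disjoint: "set_tree l \<inter> R = {}"
    and distinct: "distinct (inorder l)" "distinct (inorder r)"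
    using assms by (auto simp: R_def)
  then have card: "card (set_tree r) \<le> card (R - {y})"
    using \<open>y \<in> R\<close> by (simp add: R_def)
  have "f ` set_tree r \<subseteq> R - {y}"
    unfolding f_def using order_iso_mem[OF finite_set_tree _ card] by (auto simp: R_def)
  moreover have "inj_on f (set_tree r)"
    unfolding f_def using strict_mono_on_order_iso[OF finite_set_tree _ card]
    by (auto simp: R_def intro: strict_mono_on_imp_inj_on)
  ultimately have "set_tree (Node l y (map_tree f r)) \<subseteq> set_tree (Node l x r) \<and>
                   distinct (inorder (Node l y (map_tree f r)))"
    using \<open>y \<in> R\<close> disjoint distinct
    by (auto simp: R_def inorder_map distinct_map tree.set_map)
  moreover have "hr_flip (Node l x r) = Node l x r \<or> hr_flip (Node l x r) = Node l y (map_tree f r)"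
    by (simp add: R_def y_def f_def Let_def)
  ultimately show ?thesis using assms by auto
qed

declare hr_flip.simps(2)[simp del]

lemma size_hr_flip: "size (hr_flip t) = size t"
proof (cases t)
  case (Node l x r)
  then show ?thesis using hr_flip_shape[of l x r] by auto
qed simp

lemma size_relabel_at: "size (relabel_at a t) = size t"
  by (induction t) (auto simp: size_hr_flip)

lemma relabel_at_eq_Leaf_iff: "relabel_at a t = Leaf \<longleftrightarrow> t = Leaf"
  by (metis size_relabel_at eq_size_0)

lemma relabel_at_eq_singleton_iff: "relabel_at a t = Node Leaf z Leaf \<longleftrightarrow> t = Node Leaf z Leaf"
proof
  assume eq: "relabel_at a t = Node Leaf z Leaf"
  then have "size t = 1" using size_relabel_at[of a t] by simp
  then obtain x where "t = Node Leaf x Leaf"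
    by (cases t) auto
  then show "t = Node Leaf z Leaf" using eq by (auto simp: hr_flip.simps split: if_splits)
qed (simp add: hr_flip.simps)

lemma relabel_at_labels:
  "distinct (inorder t) \<Longrightarrow>
   set_tree (relabel_at a t) \<subseteq> set_tree t \<and> distinct (inorder (relabel_at a t))"
proof (induction t)
  case (Node l x r)
  show ?case
  proof (cases "x = a")
    case True
    then show ?thesis using hr_flip_labels[OF Node.prems] by simp
  next
    case False
    with Node show ?thesis by (fastforce simp del: set_inorder simp: set_inorder[symmetric])
  qed
qed simp

section \<open>The left spine\<close>

fun leftmost :: "'a tree \<Rightarrow> ('a \<times> 'a tree) option" where
  "leftmost Leaf = None"
| "leftmost (Node l x r) = (if l = Leaf then Some (x, r) else leftmost l)"

fun zero_leaf_parent :: "int tree \<Rightarrow> int option" where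
  "zero_leaf_parent Leaf = None"
| "zero_leaf_parent (Node l x r) =
     (if l = Node Leaf 0 Leaf then Some x else if l = Leaf then None else zero_leaf_parent l)"

lemma leftmost_exists: "t \<noteq> Leaf \<Longrightarrow> \<exists>x r. leftmost t = Some (x, r)"
  by (induction t) auto

lemma leftmost_inorder: "leftmost t = Some (x, r) \<Longrightarrow> \<exists>rest. inorder t = x # inorder r @ rest"
  by (induction t) (auto split: if_splits)

lemma minmax_ok_leftmost: "leftmost t = Some (x, r) \<Longrightarrow> minmax_ok t \<Longrightarrow> minmax_ok (Node Leaf x r)"
  by (induction t) (auto split: if_splits)

lemma zero_leaf_parent_inorder: "zero_leaf_parent t = Some c \<Longrightarrow> \<exists>rest. inorder t = 0 # c # rest"
  by (induction t) (auto split: if_splits)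

lemma zero_leaf_parent_exists:
  "leftmost t = Some (0, Leaf) \<Longrightarrow> 2 \<le> size t \<Longrightarrow> zero_leaf_parent t \<noteq> None"
proof (induction t)
  case (Node l x r)
  show ?case
  proof (cases "l = Leaf \<or> l = Node Leaf 0 Leaf")
    case False
    then obtain l1 x1 r1 where l: "l = Node l1 x1 r1" by (cases l) auto
    have "leftmost l = Some (0, Leaf)" using Node.prems(1) False by simp
    then have "l1 \<noteq> Leaf" using False l by auto
    then have "2 \<le> size l" using l by (cases l1) auto
    then show ?thesis using Node False \<open>leftmost l = Some (0, Leaf)\<close> by simp
  qed (use Node.prems in auto)
qed simp

lemma zero_leaf_parent_relabel_at: "zero_leaf_parent (relabel_at a t) = zero_leaf_parent t"
proof (induction t)
  case (Node l x r)
  show ?case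
  proof (cases "x = a \<and> l \<noteq> Node Leaf 0 Leaf")
    case True
    then obtain y r' where "relabel_at a (Node l x r) = Node l y r'"
      using hr_flip_shape[of l x r] by auto
    then show ?thesis using True by (simp del: relabel_at.simps)
  next
    case False
    then show ?thesis
      using Node.IH by (auto simp: hr_flip.simps relabel_at_eq_Leaf_iff relabel_at_eq_singleton_iff)
  qed
qed simp

lemma leftmost_relabel_at:
  assumes "leftmost t = Some (x, r)" "a \<noteq> x"
  shows "leftmost (relabel_at a t) \<in> {Some (x, r), Some (x, relabel_at a r)}"
  using assms
proof (induction t)
  case (Node l y r'')
  show ?case
  proof (cases "l = Leaf \<or> y \<noteq> a")
    case True
    then show ?thesis using Node by (auto simp: relabel_at_eq_Leaf_iff)
  next
    case False
    then obtain z r' where "relabel_at a (Node l y r'') = Node l z r'"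
      using hr_flip_shape[of l y r''] by auto
    then show ?thesis using False Node.prems(1) by (simp del: relabel_at.simps)
  qed
qed simp

section \<open>The HR-tree of a word\<close>

definition root_index :: "int list \<Rightarrow> nat" where
  "root_index w = (LEAST k. w ! k \<in> {Min (set w), Max (set w)})"

lemma root_index:
  assumes "w \<noteq> []"
  shows "root_index w < length w" "w ! root_index w \<in> {Min (set w), Max (set w)}"
proof -
  obtain k where k: "k < length w" "w ! k = Min (set w)"
    using assms Min_in[of "set w"] by (auto simp: in_set_conv_nth)
  then have "root_index w \<le> k"
    unfolding root_index_def by (intro Least_le) simp
  then show "root_index w < length w" using k by simp
  show "w ! root_index w \<in> {Min (set w), Max (set w)}"
    unfolding root_index_def by (rule LeastI[of _ k]) (simp add: k)
qed

lemma extremum_notin_take_root_index: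
  "v \<in> set (take (root_index w) w) \<Longrightarrow> v \<noteq> Min (set w) \<and> v \<noteq> Max (set w)"
  unfolding in_set_conv_nth root_index_def using not_less_Least by fastforce

lemma opposite_extremum_in_drop_root_index:
  assumes "distinct w" "2 \<le> length w"
  shows "(if w ! root_index w = Min (set w) then Max (set w) else Min (set w))
           \<in> set (drop (Suc (root_index w)) w)" (is "?e \<in> _")
proof -
  let ?i = "root_index w"
  have "w \<noteq> []" using assms(2) by auto
  have "w ! 0 \<noteq> w ! 1" "w ! 0 \<in> set w" "w ! 1 \<in> set w"
    using assms nth_eq_iff_index_eq by (fastforce intro!: nth_mem)+
  then have "Min (set w) \<noteq> Max (set w)"
    by (metis Max_ge Min_le finite_set order_antisym)
  then have "?e \<noteq> w ! ?i"
    using root_index(2)[OF \<open>w \<noteq> []\<close>] by auto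
  moreover have "?e \<notin> set (take ?i w)"
    using extremum_notin_take_root_index by (metis (full_types))
  moreover have "?e \<in> set w"
    using \<open>w \<noteq> []\<close> by simp
  moreover have "set w = set (take ?i w) \<union> {w ! ?i} \<union> set (drop (Suc ?i) w)"
    by (subst id_take_nth_drop[OF root_index(1)[OF \<open>w \<noteq> []\<close>]]) auto
  ultimately show ?thesis by blast
qed

function hr_tree_of :: "int list \<Rightarrow> int tree" where
  "hr_tree_of w = (if w = [] then Leaf else
     Node (hr_tree_of (take (root_index w) w)) (w ! root_index w)
          (hr_tree_of (drop (Suc (root_index w)) w)))"
  by pat_completeness auto
termination
  by (relation "measure length") (auto dest: root_index(1))

declare hr_tree_of.simps[simp del]

lemma inorder_hr_tree_of: "inorder (hr_tree_of w) = w"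
proof (induction w rule: hr_tree_of.induct)
  case (1 w)
  show ?case
  proof (cases "w = []")
    case False
    then show ?thesis
      using 1 id_take_nth_drop[OF root_index(1)[OF False]] by (subst hr_tree_of.simps) simp
  qed (simp add: hr_tree_of.simps)
qed

lemma set_tree_hr_tree_of: "set_tree (hr_tree_of w) = set w"
  by (metis inorder_hr_tree_of set_inorder)

lemma HR_tree_hr_tree_of: "distinct w \<Longrightarrow> HR_tree (hr_tree_of w)"
proof (induction w rule: hr_tree_of.induct)
  case (1 w)
  show ?case
  proof (cases "w = []")
    case False
    let ?i = "root_index w"
    define l where "l = hr_tree_of (take ?i w)"
    define r where "r = hr_tree_of (drop (Suc ?i) w)"
    have t: "hr_tree_of w = Node l (w ! ?i) r"
      using False by (subst hr_tree_of.simps) (simp add: l_def r_def)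
    have sub: "HR_tree l" "HR_tree r"
      using 1 False by (simp_all add: l_def r_def)
    have "w ! ?i \<in> {Min (set w), Max (set w)}"
      using root_index(2)[OF False] .
    moreover have hr: "r \<noteq> Leaf \<and>
        (if w ! ?i = Min (set w) then Max (set w) else Min (set w)) \<in> set_tree r"
      if "l \<noteq> Leaf \<or> r \<noteq> Leaf"
    proof -
      have "length w = size l + 1 + size r"
        using arg_cong[OF t, of "\<lambda>t. length (inorder t)"] by (simp add: inorder_hr_tree_of)
      then have "2 \<le> length w" using that by (cases l; cases r) auto
      then have "(if w ! ?i = Min (set w) then Max (set w) else Min (set w)) \<in> set_tree r"
        using opposite_extremum_in_drop_root_index[OF "1.prems"]
        by (simp add: r_def set_tree_hr_tree_of)
      then show ?thesis by auto
    qed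
    moreover have "set_tree (Node l (w ! ?i) r) = set w"
      using set_tree_hr_tree_of[of w] t by simp
    moreover have "inorder (Node l (w ! ?i) r) = w"
      using inorder_hr_tree_of[of w] t by simp
    ultimately show ?thesis
      using sub "1.prems" unfolding t HR_tree_def min_max_tree_def minmax_ok.simps hr_ok.simps
      by (metis insertE singletonD)
  qed (simp add: hr_tree_of.simps HR_tree_def min_max_tree_def)
qed

lemma extremum_notin_left_subtree:
  assumes "HR_tree (Node l x r)"
  shows "Min (set_tree (Node l x r)) \<notin> set_tree l \<and> Max (set_tree (Node l x r)) \<notin> set_tree l"
proof (cases "l = Leaf \<and> r = Leaf")
  case False
  have "x \<notin> set_tree l" "set_tree l \<inter> set_tree r = {}"
    using assms by (auto simp: HR_tree_def min_max_tree_def)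
  moreover have "x = Min (set_tree (Node l x r)) \<or> x = Max (set_tree (Node l x r))"
    using assms unfolding HR_tree_def min_max_tree_def minmax_ok.simps by blast
  moreover have "if x = Min (set_tree (Node l x r)) then Max (set_tree (Node l x r)) \<in> set_tree r
                 else Min (set_tree (Node l x r)) \<in> set_tree r"
    using assms False unfolding HR_tree_def hr_ok.simps by blast
  ultimately show ?thesis by (auto split: if_splits)
qed simp

lemma root_index_inorder:
  assumes "HR_tree (Node l x r)"
  shows "root_index (inorder (Node l x r)) = length (inorder l)"
  unfolding root_index_def
proof (rule Least_equality)
  let ?w = "inorder (Node l x r)"
  show "?w ! length (inorder l) \<in> {Min (set ?w), Max (set ?w)}"
    using assms unfolding HR_tree_def min_max_tree_def minmax_ok.simps set_inorder
    by (simp add: nth_append)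
  fix k assume k: "?w ! k \<in> {Min (set ?w), Max (set ?w)}"
  show "length (inorder l) \<le> k"
  proof (rule ccontr)
    assume "\<not> length (inorder l) \<le> k"
    then have "?w ! k \<in> set_tree l"
      by (auto simp: nth_append simp del: set_inorder simp add: set_inorder[symmetric])
    then show False
      using k extremum_notin_left_subtree[OF assms] by auto
  qed
qed

lemma hr_tree_of_inorder: "HR_tree t \<Longrightarrow> hr_tree_of (inorder t) = t"
proof (induction t)
  case Leaf
  then show ?case by (simp add: hr_tree_of.simps)
next
  case (Node l x r)
  have "HR_tree l" "HR_tree r"
    using Node.prems by (auto simp: HR_tree_def min_max_tree_def)
  then show ?case
    using Node root_index_inorder[OF Node.prems] by (subst hr_tree_of.simps) (simp add: nth_append)
qed

lemma signed_perm_distinct: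
  assumes "p \<in> signed_perms n"
  shows "distinct (0 # p)"
proof -
  have "distinct (map abs p)" and abs_p: "abs ` set p = {1..int n}"
    using assms by (simp_all add: signed_perms_def)
  moreover have "0 \<notin> set p"
    using abs_p by (metis abs_zero atLeastAtMost_iff image_eqI not_one_le_zero)
  ultimately show ?thesis by (simp add: distinct_map)
qed

lemma signed_perm_set:
  assumes "p \<in> signed_perms n"
  shows "\<exists>s. (\<forall>i\<in>{1..n}. s i = int i \<or> s i = - int i) \<and> set p = s ` {1..n}"
proof -
  define s where "s i = (if int i \<in> set p then int i else - int i)" for i :: nat
  have abs_p: "abs ` set p = {1..int n}" and inj: "inj_on abs (set p)"
    using assms by (simp_all add: signed_perms_def distinct_map)
  have range: "nat \<bar>z\<bar> \<in> {1..n}" "int (nat \<bar>z\<bar>) = \<bar>z\<bar>" if "z \<in> set p" for z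
  proof -
    have "\<bar>z\<bar> \<in> {1..int n}" using abs_p that by blast
    then show "nat \<bar>z\<bar> \<in> {1..n}" "int (nat \<bar>z\<bar>) = \<bar>z\<bar>" by auto
  qed
  have "s (nat \<bar>z\<bar>) = z" if "z \<in> set p" for z
  proof (cases "z > 0")
    case False
    have "- z \<notin> set p"
    proof
      assume "- z \<in> set p"
      then have "- z = z" using inj_onD[OF inj, of "- z" z] that by simp
      then show False using range[OF that] by simp
    qed
    then show ?thesis using False by (simp add: s_def)
  qed (use that in \<open>simp add: s_def\<close>)
  then have "set p \<subseteq> s ` {1..n}"
    using range by (intro subsetI) (metis image_eqI)
  moreover have "s i \<in> set p" if "i \<in> {1..n}" for i
  proof -
    have "int i \<in> abs ` set p" using abs_p that by simp
    then obtain z where "z \<in> set p" "\<bar>z\<bar> = int i" by (rule imageE) simp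
    moreover have "z = int i \<or> z = - int i" using \<open>\<bar>z\<bar> = int i\<close> by linarith
    ultimately show ?thesis unfolding s_def by auto
  qed
  ultimately have "set p = s ` {1..n}" by blast
  then show ?thesis by (intro exI[of _ s]) (simp add: s_def)
qed

lemma T_pi_eq_hr_tree_of:
  assumes "p \<in> signed_perms n"
  shows "T_pi p = hr_tree_of (0 # p)"
  unfolding T_pi_def
proof (rule the_equality)
  obtain s where s: "\<forall>i\<in>{1..n}. s i = int i \<or> s i = - int i" "set p = s ` {1..n}"
    using signed_perm_set[OF assms] by blast
  have "length p = n" using assms by (simp add: signed_perms_def)
  moreover have "inorder (hr_tree_of (0 # p)) = 0 # p" by (rule inorder_hr_tree_of)
  ultimately show "hr_tree_of (0 # p) \<in> BHR (length p) \<and> inorder (hr_tree_of (0 # p)) = 0 # p"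
    using s HR_tree_hr_tree_of[OF signed_perm_distinct[OF assms]]
    by (auto simp: BHR_def set_tree_hr_tree_of)
next
  fix t assume "t \<in> BHR (length p) \<and> inorder t = 0 # p"
  then show "t = hr_tree_of (0 # p)"
    using hr_tree_of_inorder[of t] by (simp add: BHR_def)
qed

section \<open>The sign of the letter after \<open>0\<close>\<close>

lemma sgn_eq_if_zero_extremal:
  fixes S :: "'a::linordered_idom set"
  assumes "finite S" "0 \<notin> S" "0 = Min (insert 0 S) \<or> 0 = Max (insert 0 S)" "z \<in> S" "u \<in> S"
  shows "sgn z = sgn u"
  using assms(3)
proof
  assume "0 = Min (insert 0 S)"
  then have "0 < v" if "v \<in> S" for v
    using Min_le[of "insert 0 S" v] assms(1,2) that
    by (metis finite_insert insertCI order.not_eq_order_implies_strict)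
  then show ?thesis using assms(4,5) by simp
next
  assume "0 = Max (insert 0 S)"
  then have "v < 0" if "v \<in> S" for v
    using Max_ge[of "insert 0 S" v] assms(1,2) that
    by (metis finite_insert insertCI order.not_eq_order_implies_strict)
  then show ?thesis using assms(4,5) by simp
qed

text \<open>The size condition makes \<open>inorder t ! i\<close>, \<open>1 \<le> i \<le> n\<close>, a genuine label
different from \<open>0\<close>, so that \<open>\<psi>\<^sub>i\<close> never acts at the node \<open>0\<close>.\<close>

definition sign_invariant :: "nat \<Rightarrow> int \<Rightarrow> int tree \<Rightarrow> bool" where
  "sign_invariant n c t \<longleftrightarrow> zero_leaf_parent t = Some c \<or>
     (distinct (inorder t) \<and> size t = Suc n \<and>
      (\<exists>r. leftmost t = Some (0, r) \<and> r \<noteq> Leaf \<and> (\<forall>z\<in>set_tree r. sgn z = sgn c)))"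

lemma sign_invariant_T_pi:
  assumes "p \<in> signed_perms n" "1 \<le> n"
  shows "sign_invariant n (p ! 0) (T_pi p)"
proof -
  define t where "t = T_pi p"
  have d: "distinct (inorder t)" and it: "inorder t = 0 # p" and "HR_tree t"
    using T_pi_eq_hr_tree_of[OF assms(1)] signed_perm_distinct[OF assms(1)]
    by (simp_all add: t_def inorder_hr_tree_of HR_tree_hr_tree_of)
  have "length p = n" using assms(1) by (simp add: signed_perms_def)
  then obtain q where p: "p = p ! 0 # q" using assms(2) by (cases p) auto
  have "t \<noteq> Leaf" using it by auto
  then obtain x r where lm: "leftmost t = Some (x, r)"
    using leftmost_exists by blast
  then obtain rest where ir: "inorder t = x # inorder r @ rest"
    using leftmost_inorder[OF lm] by blast
  then have "x = 0" using it by simp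
  show ?thesis
  proof (cases "r = Leaf")
    case True
    have "2 \<le> size t" using arg_cong[OF it, of length] \<open>length p = n\<close> assms(2) by simp
    then obtain c where "zero_leaf_parent t = Some c"
      using zero_leaf_parent_exists[of t] lm True \<open>x = 0\<close> by auto
    moreover have "c = p ! 0"
      using zero_leaf_parent_inorder[OF calculation] it p by auto
    ultimately show ?thesis by (simp add: sign_invariant_def t_def)
  next
    case False
    then obtain u v where uv: "inorder r = u # v" by (cases "inorder r") auto
    then have "u = p ! 0" using ir it p \<open>x = 0\<close> by simp
    have "0 \<notin> set_tree r"
      using d ir \<open>x = 0\<close> by (simp del: set_inorder add: set_inorder[symmetric])
    moreover have "0 = Min (insert 0 (set_tree r)) \<or> 0 = Max (insert 0 (set_tree r))"
      using minmax_ok_leftmost[OF lm] \<open>HR_tree t\<close> \<open>x = 0\<close>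
      by (simp add: HR_tree_def min_max_tree_def)
    moreover have "u \<in> set_tree r" using uv by (metis list.set_intros(1) set_inorder)
    ultimately have "\<forall>z\<in>set_tree r. sgn z = sgn (p ! 0)"
      using sgn_eq_if_zero_extremal[OF finite_set_tree] \<open>u = p ! 0\<close> by metis
    moreover have "size t = Suc n"
      using arg_cong[OF it, of length] \<open>length p = n\<close> by simp
    ultimately show ?thesis
      using d lm False \<open>x = 0\<close> unfolding sign_invariant_def t_def by blast
  qed
qed

lemma sign_invariant_psi:
  assumes "sign_invariant n c t" "i \<in> {1..n}"
  shows "sign_invariant n c (psi i t)"
proof (cases "zero_leaf_parent t = Some c")
  case True
  then show ?thesis by (simp add: sign_invariant_def psi_def zero_leaf_parent_relabel_at)
next
  case False
  let ?a = "inorder t ! i"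
  obtain r where d: "distinct (inorder t)" and "size t = Suc n" and lm: "leftmost t = Some (0, r)"
    and "r \<noteq> Leaf" and sgn_r: "\<forall>z\<in>set_tree r. sgn z = sgn c"
    using assms(1) False by (auto simp: sign_invariant_def)
  obtain rest where ir: "inorder t = 0 # inorder r @ rest"
    using leftmost_inorder[OF lm] by blast
  have "i < length (inorder t)" using assms(2) \<open>size t = Suc n\<close> by simp
  then have "?a \<noteq> inorder t ! 0"
    using nth_eq_iff_index_eq[OF d, of i 0] assms(2) by auto
  then have "?a \<noteq> 0" using ir by simp
  then have "leftmost (psi i t) \<in> {Some (0, r), Some (0, relabel_at ?a r)}"
    using leftmost_relabel_at[OF lm] by (simp add: psi_def)
  moreover have "relabel_at ?a r \<noteq> Leaf"
    using \<open>r \<noteq> Leaf\<close> relabel_at_eq_Leaf_iff by blast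
  moreover have "\<forall>z\<in>set_tree (relabel_at ?a r). sgn z = sgn c"
    using relabel_at_labels[of r ?a] sgn_r d ir by auto
  moreover have "distinct (inorder (psi i t))" "size (psi i t) = Suc n"
    using relabel_at_labels[OF d] size_relabel_at \<open>size t = Suc n\<close> by (simp_all add: psi_def)
  ultimately show ?thesis
    using \<open>r \<noteq> Leaf\<close> sgn_r unfolding sign_invariant_def by blast
qed

lemma sign_invariant_second_letter:
  assumes "sign_invariant n c t"
  shows "sgn (inorder t ! 1) = sgn c"
proof (cases "zero_leaf_parent t = Some c")
  case True
  then show ?thesis using zero_leaf_parent_inorder by fastforce
next
  case False
  then obtain r where lm: "leftmost t = Some (0, r)" and "r \<noteq> Leaf"
    and sgn_r: "\<forall>z\<in>set_tree r. sgn z = sgn c"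
    using assms by (auto simp: sign_invariant_def)
  obtain rest where "inorder t = 0 # inorder r @ rest"
    using leftmost_inorder[OF lm] by blast
  moreover obtain u v where "inorder r = u # v"
    using \<open>r \<noteq> Leaf\<close> by (cases "inorder r") auto
  moreover have "u \<in> set_tree r"
    using calculation(2) by (metis list.set_intros(1) set_inorder)
  ultimately show ?thesis using sgn_r by simp
qed

theorem mainTheorem9:
  fixes n :: nat and p :: "int list" and T :: "int tree"
  assumes "n \<ge> 1" and "p \<in> signed_perms n" and "T \<in> orb n (T_pi p)"
  shows "(p ! 0 > 0 \<longrightarrow> inorder T ! 1 > 0) \<and> (p ! 0 < 0 \<longrightarrow> inorder T ! 1 < 0)"
proof -
  have "sign_invariant n (p ! 0) T"
    using assms(3)
  proof (induction rule: orb.induct)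
    case base
    show ?case using sign_invariant_T_pi assms(1,2) by simp
  next
    case (step t i)
    then show ?case using sign_invariant_psi by blast
  qed
  then have "sgn (inorder T ! 1) = sgn (p ! 0)"
    by (rule sign_invariant_second_letter)
  then show ?thesis by (auto simp: sgn_if split: if_splits)
qed

end
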